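(* Let $\phi:\mathbb{R}^{n\times n}\to\mathbb{R}$ be differentiable and $L$-gradient Lipschitz, and let $M^\star=\arg\min\phi$ satisfy $M^\star\succeq0$. Let $f(X)=\phi(XX^T)$. For $X\in\mathbb{R}^{n\times r}$ and $\eta\ge0$ with $X^TX+\eta I$ positive definite, the search direction $V=\nabla f(X)(X^TX+\eta I)^{-1}$ satisfies \[ \|V\|_{X,\eta}=\|\nabla f(X)\|_{X,\eta}^*\le2L\|XX^T-M^\star\|_F. \]
   Context: $\phi$ is $L$-gradient Lipschitz if $\|\nabla\phi(M+E)-\nabla\phi(M)\|_F\le L\|E\|_F$ for all $M,E$. Local norm $\|U\|_{X,\eta}=\|U(X^TX+\eta I)^{1/2}\|_F$ and dual local norm $\|U\|_{X,\eta}^*=\|U(X^TX+\eta I)^{-1/2}\|_F$. *)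

theory Defs
  imports "HOL-Analysis.Analysis"
begin

text \<open>Matrices in R^{m x k} are represented as real^'k^'m (rows indexed by 'm).
  The inner product on this type is the Frobenius (trace) inner product and
  norm is the Frobenius norm.\<close>

definition gradient :: "('a::real_inner \<Rightarrow> real) \<Rightarrow> 'a \<Rightarrow> 'a" where
  "gradient F x = (SOME G. (F has_derivative (\<lambda>E. G \<bullet> E)) (at x))"

definition psd_mat :: "real^'n^'n \<Rightarrow> bool" where
  "psd_mat A \<longleftrightarrow> transpose A = A \<and> (\<forall>x. 0 \<le> x \<bullet> (A *v x))"

definition pd_mat :: "real^'n^'n \<Rightarrow> bool" where
  "pd_mat A \<longleftrightarrow> transpose A = A \<and> (\<forall>x. x \<noteq> 0 \<longrightarrow> 0 < x \<bullet> (A *v x))"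

definition mat_sqrt :: "real^'n^'n \<Rightarrow> real^'n^'n" where
  "mat_sqrt A = (THE S. psd_mat S \<and> S ** S = A)"

definition local_norm :: "real^'r^'n \<Rightarrow> real \<Rightarrow> real^'r^'n \<Rightarrow> real" where
  "local_norm X \<eta> U = norm (U ** mat_sqrt (transpose X ** X + \<eta> *\<^sub>R mat 1))"

definition dual_local_norm :: "real^'r^'n \<Rightarrow> real \<Rightarrow> real^'r^'n \<Rightarrow> real" where
  "dual_local_norm X \<eta> U =
     norm (U ** matrix_inv (mat_sqrt (transpose X ** X + \<eta> *\<^sub>R mat 1)))"

end

theory Submission
  imports Defs
begin

(* Let H = X^T X + eta I, S = H^(1/2) and G = grad phi (X X^T). Since H^-1 S = S^-1, the local
   norm of V = grad f(X) H^-1 is the dual local norm of grad f(X). By the chain rule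
   grad f(X) = (G + G^T) X, and X S^-1 is a contraction because S^2 dominates X^T X; hence
   |grad f(X) S^-1|_F <= |G + G^T|_F <= 2 |G|_F. As grad phi vanishes at the minimiser M*, the
   Lipschitz bound gives |G|_F <= L |X X^T - M*|_F.

   The principal square root is well defined because symmetric matrices have orthonormal
   eigenbases, obtained by maximising the Rayleigh quotient on invariant subspaces; uniqueness
   follows by testing S^2 = T^2 against the eigenvectors of S - T. *)

lemma symmetric_matrix_inner:
  fixes A :: "real^'n^'n"
  assumes "transpose A = A"
  shows "(A *v x) \<bullet> y = x \<bullet> (A *v y)"
  by (metis assms dot_lmul_matrix transpose_matrix_vector)

lemma quadratic_nonpos_imp_linear_coeff_zero:
  fixes b c :: real
  assumes nonpos: "\<And>t. b * t + c * t\<^sup>2 \<le> 0"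
  shows "b = 0"
proof (rule ccontr)
  assume "b \<noteq> 0"
  define e where "e = 1 / (\<bar>c\<bar> + 1)"
  have "e > 0" unfolding e_def by simp
  have "\<bar>c\<bar> * e < 1" unfolding e_def by simp
  moreover have "- \<bar>c\<bar> * e \<le> c * e" using \<open>e > 0\<close> by (intro mult_right_mono) auto
  ultimately have "1 + c * e > 0" by linarith
  moreover have "b * b * e > 0"
    using \<open>b \<noteq> 0\<close> \<open>e > 0\<close> by (metis mult_pos_pos not_real_square_gt_zero)
  ultimately have "(b * b * e) * (1 + c * e) > 0" by simp
  also have "(b * b * e) * (1 + c * e) = b * (b * e) + c * (b * e)\<^sup>2"
    by (simp add: power2_eq_square algebra_simps)
  finally show False using nonpos[of "b * e"] by linarith
qed

lemma rayleigh_maximizer_orthogonal: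
  fixes A :: "real^'n^'n"
  assumes sym: "transpose A = A" and W: "subspace W"
    and v: "v \<in> W" "norm v = 1"
    and max: "\<And>y. y \<in> W \<Longrightarrow> norm y = 1 \<Longrightarrow> y \<bullet> (A *v y) \<le> v \<bullet> (A *v v)"
    and w: "w \<in> W" "w \<bullet> v = 0"
  shows "w \<bullet> (A *v v) = 0"
proof -
  define M where "M = v \<bullet> (A *v v)"
  have quotient_le: "u \<bullet> (A *v u) \<le> M * (u \<bullet> u)" if "u \<in> W" for u
  proof (cases "u = 0")
    case False
    then have "norm u \<noteq> 0" by simp
    have "u /\<^sub>R norm u \<in> W" using W \<open>u \<in> W\<close> by (simp add: subspace_scale)
    moreover have "norm (u /\<^sub>R norm u) = 1" using False by simp
    ultimately have "(u /\<^sub>R norm u) \<bullet> (A *v (u /\<^sub>R norm u)) \<le> M"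
      unfolding M_def by (rule max)
    moreover have "(u /\<^sub>R norm u) \<bullet> (A *v (u /\<^sub>R norm u)) = (u \<bullet> (A *v u)) / (norm u)\<^sup>2"
      by (simp add: matrix_vector_mult_scaleR power2_eq_square divide_inverse mult_ac)
    ultimately show ?thesis
      using \<open>norm u \<noteq> 0\<close> by (simp add: divide_le_eq power2_norm_eq_inner mult.commute)
  qed simp
  \<comment> \<open>Maximality of the Rayleigh quotient at v, tested on the competitors v + t w.\<close>
  have "(2 * (w \<bullet> (A *v v))) * t + (w \<bullet> (A *v w) - M * (w \<bullet> w)) * t\<^sup>2 \<le> 0" for t
  proof -
    define u where "u = v + t *\<^sub>R w"
    have "u \<in> W" unfolding u_def using W v w by (simp add: subspace_add subspace_scale)
    have "v \<bullet> v = 1" using v by (simp add: norm_eq_1)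
    then have "u \<bullet> u = 1 + t\<^sup>2 * (w \<bullet> w)"
      unfolding u_def using w
      by (simp add: inner_add_left inner_add_right inner_commute power2_eq_square)
    moreover have "u \<bullet> (A *v u) = M + 2 * t * (w \<bullet> (A *v v)) + t\<^sup>2 * (w \<bullet> (A *v w))"
    proof -
      have "v \<bullet> (A *v w) = w \<bullet> (A *v v)"
        using symmetric_matrix_inner[OF sym, of v w] by (simp add: inner_commute)
      then show ?thesis
        unfolding u_def M_def
        by (simp add: power2_eq_square algebra_simps)
    qed
    ultimately show ?thesis
      using quotient_le[OF \<open>u \<in> W\<close>] by (simp add: algebra_simps)
  qed
  then have "2 * (w \<bullet> (A *v v)) = 0" by (rule quadratic_nonpos_imp_linear_coeff_zero)
  then show ?thesis by simp
qed

lemma symmetric_matrix_eigenvector_in_invariant_subspace: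
  fixes A :: "real^'n^'n"
  assumes sym: "transpose A = A" and W: "subspace W"
    and invariant: "\<And>x. x \<in> W \<Longrightarrow> A *v x \<in> W"
    and nontrivial: "w \<in> W" "w \<noteq> 0"
  obtains v where "v \<in> W" "norm v = 1" "A *v v = (v \<bullet> (A *v v)) *\<^sub>R v"
proof -
  let ?S = "W \<inter> sphere 0 1"
  have "compact ?S"
    using closed_subspace[OF W] compact_sphere closed_Int_compact by blast
  moreover have "w /\<^sub>R norm w \<in> ?S" using nontrivial W by (simp add: subspace_scale)
  moreover have "continuous_on ?S (\<lambda>x. x \<bullet> (A *v x))"
    by (intro continuous_intros linear_continuous_on) (simp add: linear_linear)
  ultimately obtain v where "v \<in> ?S" and max: "\<And>y. y \<in> ?S \<Longrightarrow> y \<bullet> (A *v y) \<le> v \<bullet> (A *v v)"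
    using continuous_attains_sup[of ?S] by blast
  then have v: "v \<in> W" "norm v = 1" by auto
  define z where "z = A *v v - (v \<bullet> (A *v v)) *\<^sub>R v"
  have "v \<bullet> v = 1" using v by (simp add: norm_eq_1)
  then have "z \<bullet> v = 0"
    unfolding z_def inner_diff_left inner_scaleR_left by (simp add: inner_commute)
  moreover have "z \<in> W" unfolding z_def using invariant v W by (simp add: subspace_diff subspace_scale)
  ultimately have "z \<bullet> (A *v v) = 0"
    using rayleigh_maximizer_orthogonal[OF sym W v] max by auto
  then have "z \<bullet> z = 0"
    using \<open>z \<bullet> v = 0\<close> by (simp add: z_def inner_diff_right)
  then show ?thesis using that v unfolding z_def by simp
qed

definition orthonormal_eigenvectors :: "real^'n^'n \<Rightarrow> (real^'n) set \<Rightarrow> bool" where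
  "orthonormal_eigenvectors A B \<longleftrightarrow> finite B \<and> pairwise orthogonal B \<and>
     (\<forall>b\<in>B. norm b = 1 \<and> A *v b = (b \<bullet> (A *v b)) *\<^sub>R b)"

lemma orthonormal_eigenvectors_extend:
  fixes A :: "real^'n^'n"
  assumes sym: "transpose A = A" and B: "orthonormal_eigenvectors A B"
    and incomplete: "span B \<noteq> UNIV"
  obtains v where "v \<notin> B" "orthonormal_eigenvectors A (insert v B)"
proof -
  have ev: "\<And>b. b \<in> B \<Longrightarrow> A *v b = (b \<bullet> (A *v b)) *\<^sub>R b"
    using B unfolding orthonormal_eigenvectors_def by auto
  define W where "W = {y. \<forall>b\<in>B. b \<bullet> y = 0}"
  have W: "subspace W" unfolding W_def subspace_def by (simp add: inner_add_right)
  have "A *v y \<in> W" if "y \<in> W" for y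
  proof -
    have "b \<bullet> (A *v y) = (b \<bullet> (A *v b)) * (b \<bullet> y)" if "b \<in> B" for b
      using symmetric_matrix_inner[OF sym, of b y] ev[OF that] by (metis inner_scaleR_left)
    then show ?thesis using \<open>y \<in> W\<close> unfolding W_def by simp
  qed
  moreover obtain x where "x \<noteq> 0" and x: "\<And>y. y \<in> span B \<Longrightarrow> orthogonal x y"
    using orthogonal_to_subspace_exists[of B] incomplete dim_eq_full dim_subset_UNIV
    by (metis order_less_le)
  moreover have "x \<in> W"
    using x span_base unfolding W_def orthogonal_def by (force simp: inner_commute)
  ultimately obtain v where "v \<in> W" "norm v = 1" "A *v v = (v \<bullet> (A *v v)) *\<^sub>R v"
    using symmetric_matrix_eigenvector_in_invariant_subspace[OF sym W] by metis
  moreover have "v \<notin> B"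
    using \<open>v \<in> W\<close> \<open>norm v = 1\<close> unfolding W_def by auto
  ultimately show ?thesis
    using that B unfolding orthonormal_eigenvectors_def pairwise_insert W_def orthogonal_def
    by (auto simp: inner_commute)
qed

lemma symmetric_matrix_orthonormal_eigenbasis:
  fixes A :: "real^'n^'n"
  assumes sym: "transpose A = A"
  obtains B where "orthonormal_eigenvectors A B" "span B = UNIV"
proof -
  have "\<exists>B'. orthonormal_eigenvectors A B' \<and> span B' = UNIV"
    if "orthonormal_eigenvectors A B" for B
    using that
  proof (induction "DIM(real^'n) - card B" arbitrary: B rule: less_induct)
    case less
    show ?case
    proof (cases "span B = UNIV")
      case False
      then obtain v where "v \<notin> B" and extended: "orthonormal_eigenvectors A (insert v B)"
        using orthonormal_eigenvectors_extend[OF sym less.prems] by blast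
      then have "independent (insert v B)"
        by (intro pairwise_orthogonal_independent) (auto simp: orthonormal_eigenvectors_def)
      then have "card (insert v B) \<le> DIM(real^'n)" using independent_bound by blast
      moreover have "card (insert v B) = Suc (card B)"
        using \<open>v \<notin> B\<close> less.prems by (simp add: orthonormal_eigenvectors_def)
      ultimately show ?thesis using less.hyps[OF _ extended] by simp
    qed (use less.prems in blast)
  qed
  moreover have "orthonormal_eigenvectors A {}" by (simp add: orthonormal_eigenvectors_def)
  ultimately show ?thesis using that by blast
qed

lemma transpose_add: "transpose ((A::'a::semiring_1^'n^'m) + B) = transpose A + transpose B"
  by (simp add: transpose_def vec_eq_iff)

lemma transpose_diff: "transpose ((A::'a::ring_1^'n^'m) - B) = transpose A - transpose B"
  by (simp add: transpose_def vec_eq_iff)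

lemma symmetric_matrixI:
  fixes A :: "real^'n^'n"
  assumes "\<And>x y. x \<bullet> (A *v y) = y \<bullet> (A *v x)"
  shows "transpose A = A"
  unfolding matrix_eq
proof
  fix x
  have "(transpose A *v x) \<bullet> y = (A *v x) \<bullet> y" for y
  proof -
    have "(transpose A *v x) \<bullet> y = x \<bullet> (A *v y)" by (simp add: dot_lmul_matrix)
    also have "\<dots> = (A *v x) \<bullet> y" using assms[of x y] by (simp add: inner_commute)
    finally show ?thesis .
  qed
  then show "transpose A *v x = A *v x" by (metis vector_eq_rdot)
qed

lemma orthonormal_sum_inner_scaleR:
  fixes g :: "'a::real_inner \<Rightarrow> 'b::real_vector"
  assumes "finite B" "pairwise orthogonal B" "\<And>c. c \<in> B \<Longrightarrow> norm c = 1" "b \<in> B"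
  shows "(\<Sum>c\<in>B. (c \<bullet> b) *\<^sub>R g c) = g b"
proof -
  have "(\<Sum>c\<in>B. (c \<bullet> b) *\<^sub>R g c) = (\<Sum>c\<in>B. if c = b then g c else 0)"
    using assms(2-4) by (intro sum.cong) (auto simp: pairwise_def orthogonal_def norm_eq_1)
  then show ?thesis using assms(1,4) by simp
qed

lemma exists_matrix_with_orthonormal_eigenvectors:
  fixes B :: "(real^'n) set" and \<sigma> :: "real^'n \<Rightarrow> real"
  assumes fin: "finite B" and orth: "pairwise orthogonal B"
    and unit: "\<And>b. b \<in> B \<Longrightarrow> norm b = 1"
  obtains S :: "real^'n^'n"
  where "\<And>x y. x \<bullet> (S *v y) = (\<Sum>b\<in>B. \<sigma> b * (b \<bullet> x) * (b \<bullet> y))"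
    and "\<And>b. b \<in> B \<Longrightarrow> S *v b = \<sigma> b *\<^sub>R b"
proof -
  define f where "f x = (\<Sum>b\<in>B. (\<sigma> b * (b \<bullet> x)) *\<^sub>R b)" for x
  have "linear f"
  proof (rule linearI)
    show "f (x + y) = f x + f y" for x y
      unfolding f_def by (simp add: inner_add_right distrib_left scaleR_add_left sum.distrib)
    show "f (c *\<^sub>R x) = c *\<^sub>R f x" for c x
      unfolding f_def by (simp add: scaleR_sum_right mult_ac)
  qed
  define S where "S = matrix f"
  have S: "S *v x = f x" for x
    unfolding S_def using fun_cong[OF matrix_vector_mul(2)[OF \<open>linear f\<close>]] by simp
  show ?thesis
  proof
    show "x \<bullet> (S *v y) = (\<Sum>b\<in>B. \<sigma> b * (b \<bullet> x) * (b \<bullet> y))" for x y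
      by (simp add: S f_def inner_sum_right inner_commute mult_ac)
    fix b assume "b \<in> B"
    have "S *v b = (\<Sum>c\<in>B. (c \<bullet> b) *\<^sub>R (\<sigma> c *\<^sub>R c))"
      by (simp add: S f_def mult.commute)
    also have "\<dots> = \<sigma> b *\<^sub>R b"
      by (rule orthonormal_sum_inner_scaleR[OF fin orth unit \<open>b \<in> B\<close>])
    finally show "S *v b = \<sigma> b *\<^sub>R b" .
  qed
qed

lemma psd_mat_sqrt_exists:
  fixes A :: "real^'n^'n"
  assumes psd: "psd_mat A"
  shows "\<exists>S. psd_mat S \<and> S ** S = A"
proof -
  obtain B where "orthonormal_eigenvectors A B" and span: "span B = UNIV"
    using symmetric_matrix_orthonormal_eigenbasis psd unfolding psd_mat_def by blast
  then have basis: "finite B" "pairwise orthogonal B" "\<And>b. b \<in> B \<Longrightarrow> norm b = 1"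
    and ev: "\<And>b. b \<in> B \<Longrightarrow> A *v b = (b \<bullet> (A *v b)) *\<^sub>R b"
    unfolding orthonormal_eigenvectors_def by auto
  define \<mu> where "\<mu> b = b \<bullet> (A *v b)" for b
  have A_eigen: "A *v b = \<mu> b *\<^sub>R b" if "b \<in> B" for b
    using ev[OF that] unfolding \<mu>_def .
  have \<mu>_nonneg: "\<mu> b \<ge> 0" for b using psd unfolding psd_mat_def \<mu>_def by auto
  obtain S where S_inner: "\<And>x y. x \<bullet> (S *v y) = (\<Sum>b\<in>B. sqrt (\<mu> b) * (b \<bullet> x) * (b \<bullet> y))"
    and S_eigen: "\<And>b. b \<in> B \<Longrightarrow> S *v b = sqrt (\<mu> b) *\<^sub>R b"
    using exists_matrix_with_orthonormal_eigenvectors[OF basis, of "\<lambda>b. sqrt (\<mu> b)"] by blast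
  have "transpose S = S"
    by (rule symmetric_matrixI) (simp add: S_inner mult_ac)
  moreover have "0 \<le> x \<bullet> (S *v x)" for x
    unfolding S_inner by (intro sum_nonneg) (simp add: \<mu>_nonneg mult.assoc)
  moreover have "(S ** S) *v x = A *v x" for x
  proof -
    have "(S ** S) *v b = A *v b" if "b \<in> B" for b
      using that
      by (simp add: matrix_vector_mul_assoc[symmetric] S_eigen A_eigen matrix_vector_mult_scaleR
          \<mu>_nonneg)
    from linear_eq_on_span[OF matrix_vector_mul_linear matrix_vector_mul_linear this]
    show ?thesis by (simp add: span)
  qed
  ultimately show ?thesis
    unfolding psd_mat_def matrix_eq by blast
qed

lemma psd_mat_kernel:
  fixes S :: "real^'n^'n"
  assumes psd: "psd_mat S" and zero: "x \<bullet> (S *v x) = 0"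
  shows "S *v x = 0"
proof -
  have sym: "transpose S = S" using psd psd_mat_def by auto
  define w where "w = S *v x"
  have "(- 2 * (w \<bullet> (S *v x))) * t + (- (w \<bullet> (S *v w))) * t\<^sup>2 \<le> 0" for t
  proof -
    have "x \<bullet> (S *v w) = w \<bullet> (S *v x)"
      using symmetric_matrix_inner[OF sym, of x w] by (simp add: inner_commute)
    then have "(x + t *\<^sub>R w) \<bullet> (S *v (x + t *\<^sub>R w))
        = x \<bullet> (S *v x) + 2 * t * (w \<bullet> (S *v x)) + t\<^sup>2 * (w \<bullet> (S *v w))"
      by (simp add: power2_eq_square algebra_simps)
    moreover have "0 \<le> (x + t *\<^sub>R w) \<bullet> (S *v (x + t *\<^sub>R w))"
      using psd psd_mat_def by blast
    ultimately show ?thesis using zero by (simp add: algebra_simps)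
  qed
  then have "- 2 * (w \<bullet> (S *v x)) = 0" by (rule quadratic_nonpos_imp_linear_coeff_zero)
  then show ?thesis unfolding w_def by simp
qed

lemma psd_mat_sqrt_unique:
  fixes S T :: "real^'n^'n"
  assumes S: "psd_mat S" and T: "psd_mat T" and eq: "S ** S = T ** T"
  shows "S = T"
proof -
  define D where "D = S - T"
  have symD: "transpose D = D"
    using S T unfolding D_def psd_mat_def by (simp add: transpose_diff)
  obtain B where "orthonormal_eigenvectors D B" and span: "span B = UNIV"
    using symmetric_matrix_orthonormal_eigenbasis[OF symD] by blast
  then have ev: "\<And>b. b \<in> B \<Longrightarrow> D *v b = (b \<bullet> (D *v b)) *\<^sub>R b"
    unfolding orthonormal_eigenvectors_def by auto
  have "D *v b = 0" if "b \<in> B" for b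
  proof -
    define \<mu> where "\<mu> = b \<bullet> (D *v b)"
    have Db: "D *v b = \<mu> *\<^sub>R b" using ev[OF that] unfolding \<mu>_def .
    have "S *v (S *v b) - T *v (T *v b) = S *v (D *v b) + D *v (T *v b)"
      unfolding D_def by (simp add: algebra_simps)
    moreover have "S *v (S *v b) = T *v (T *v b)" by (simp add: matrix_vector_mul_assoc eq)
    ultimately have "0 = b \<bullet> (S *v (D *v b)) + b \<bullet> (D *v (T *v b))"
      by (metis diff_self inner_add_right inner_zero_right)
    also have "b \<bullet> (S *v (D *v b)) = \<mu> * (b \<bullet> (S *v b))"
      by (simp add: Db matrix_vector_mult_scaleR)
    also have "b \<bullet> (D *v (T *v b)) = \<mu> * (b \<bullet> (T *v b))"
      using symmetric_matrix_inner[OF symD, of b "T *v b"] by (simp add: Db)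
    finally have "\<mu> = 0 \<or> b \<bullet> (S *v b) + b \<bullet> (T *v b) = 0"
      by (simp add: distrib_left[symmetric])
    then show ?thesis
    proof
      assume "b \<bullet> (S *v b) + b \<bullet> (T *v b) = 0"
      moreover have "0 \<le> b \<bullet> (S *v b)" "0 \<le> b \<bullet> (T *v b)" using S T psd_mat_def by blast+
      ultimately have "b \<bullet> (S *v b) = 0" "b \<bullet> (T *v b) = 0" by linarith+
      then have "S *v b = 0" "T *v b = 0" using psd_mat_kernel S T by blast+
      then show ?thesis unfolding D_def by (simp add: matrix_vector_mult_diff_rdistrib)
    qed (simp add: Db)
  qed
  then have "D *v x = 0 *v x" for x
    using linear_eq_on_span[OF matrix_vector_mul_linear matrix_vector_mul_linear, of B D 0 x]
    by (simp add: span)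
  then show ?thesis unfolding D_def matrix_eq by (simp add: matrix_vector_mult_diff_rdistrib)
qed

lemma
  fixes A :: "real^'n^'n"
  assumes "psd_mat A"
  shows mat_sqrt_psd: "psd_mat (mat_sqrt A)"
    and mat_sqrt_square: "mat_sqrt A ** mat_sqrt A = A"
proof -
  have "\<exists>!S. psd_mat S \<and> S ** S = A"
    using psd_mat_sqrt_exists[OF assms] psd_mat_sqrt_unique by blast
  then have "psd_mat (mat_sqrt A) \<and> mat_sqrt A ** mat_sqrt A = A"
    unfolding mat_sqrt_def by (rule theI')
  then show "psd_mat (mat_sqrt A)" and "mat_sqrt A ** mat_sqrt A = A" by auto
qed

lemma
  fixes A :: "'a::field^'n^'n"
  assumes "invertible A"
  shows matrix_mul_rinv: "A ** matrix_inv A = mat 1"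
    and matrix_mul_linv: "matrix_inv A ** A = mat 1"
  using someI_ex[OF assms[unfolded invertible_def]] unfolding matrix_inv_def by auto

lemma matrix_inv_square_mult:
  fixes S :: "'a::field^'n^'n"
  assumes "invertible S"
  shows "matrix_inv (S ** S) ** S = matrix_inv S"
proof -
  have "matrix_inv (S ** S) ** S = matrix_inv (S ** S) ** S ** (S ** matrix_inv S)"
    using matrix_mul_rinv[OF assms] by simp
  also have "\<dots> = matrix_inv (S ** S) ** (S ** S) ** matrix_inv S"
    by (simp add: matrix_mul_assoc)
  also have "\<dots> = matrix_inv S"
    using matrix_mul_linv[OF invertible_mult[OF assms assms]] by simp
  finally show ?thesis .
qed

lemma pd_mat_imp_psd_mat: "pd_mat A \<Longrightarrow> psd_mat A"
  unfolding pd_mat_def psd_mat_def by (metis inner_zero_left order_le_less)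

lemma pd_mat_square_imp_invertible:
  fixes S :: "real^'n^'n"
  assumes "pd_mat (S ** S)"
  shows "invertible S"
  unfolding invertible_left_inverse matrix_left_invertible_ker
proof (intro allI impI)
  fix x assume "S *v x = 0"
  then have "x \<bullet> ((S ** S) *v x) = 0" by (simp flip: matrix_vector_mul_assoc)
  then show "x = 0" using assms unfolding pd_mat_def by force
qed

lemma matrix_add_rdistrib: "((A::'a::semiring_1^'k^'m) + B) ** C = A ** C + B ** C"
  by (simp add: matrix_matrix_mult_def vec_eq_iff sum.distrib distrib_right)

lemma inner_transpose: "transpose (A::real^'k^'m) \<bullet> transpose B = A \<bullet> B"
  by (simp add: inner_vec_def transpose_def) (rule sum.swap)

lemma norm_transpose: "norm (transpose (A::real^'k^'m)) = norm A"
  by (simp add: norm_eq_sqrt_inner inner_transpose)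

lemma inner_matrix_mult_right:
  "(A::real^'k^'m) \<bullet> (B ** C) = (A ** transpose C) \<bullet> (B::real^'j^'m)"
  unfolding inner_vec_def matrix_matrix_mult_def transpose_def
  by (simp add: sum_distrib_left sum_distrib_right mult_ac) (rule sum.cong[OF refl], rule sum.swap)

lemma inner_matrix_mult_left:
  "(A::real^'k^'m) \<bullet> (B ** C) = (transpose B ** A) \<bullet> (C::real^'k^'j)"
proof -
  have "A \<bullet> (B ** C) = transpose A \<bullet> transpose (B ** C)" by (simp add: inner_transpose)
  also have "\<dots> = transpose A \<bullet> (transpose C ** transpose B)" by (simp add: matrix_transpose_mul)
  also have "\<dots> = (transpose A ** B) \<bullet> transpose C" by (simp add: inner_matrix_mult_right)
  also have "\<dots> = transpose (transpose A ** B) \<bullet> C"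
    using inner_transpose[of "transpose (transpose A ** B)" C] by simp
  also have "\<dots> = (transpose B ** A) \<bullet> C" by (simp add: matrix_transpose_mul)
  finally show ?thesis .
qed

lemma has_derivative_mult_transpose:
  "((\<lambda>Y::real^'r^'n. Y ** transpose Y) has_derivative
     (\<lambda>E. X ** transpose E + E ** transpose X)) (at X)"
proof -
  have "bilinear (\<lambda>(A::real^'r^'n) (B::real^'r^'n). A ** transpose B)"
    unfolding bilinear_def
    by (auto intro!: linearI simp: transpose_add matrix_add_ldistrib matrix_add_rdistrib
        transpose_scalar matrix_scalar_ac scalar_matrix_assoc[symmetric])
  then have "bounded_bilinear (\<lambda>(A::real^'r^'n) (B::real^'r^'n). A ** transpose B)"
    by (rule bilinear_conv_bounded_bilinear[THEN iffD1])
  from bounded_bilinear.FDERIV[OF this has_derivative_ident has_derivative_ident, of X UNIV]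
  show ?thesis by simp
qed

lemma has_derivative_gradient:
  fixes F :: "'a::euclidean_space \<Rightarrow> real"
  assumes "(F has_derivative F') (at x)"
  shows "(F has_derivative (\<lambda>E. gradient F x \<bullet> E)) (at x)"
proof -
  have "F' = (\<lambda>E. adjoint F' 1 \<bullet> E)"
    using adjoint_works[OF has_derivative_linear[OF assms], of _ 1] by (simp add: inner_commute)
  then have "\<exists>G. (F has_derivative (\<lambda>E. G \<bullet> E)) (at x)" using assms by metis
  then show ?thesis unfolding gradient_def by (rule someI_ex)
qed

lemma gradient_eqI:
  fixes F :: "'a::euclidean_space \<Rightarrow> real"
  assumes "(F has_derivative (\<lambda>E. G \<bullet> E)) (at x)"
  shows "gradient F x = G"
proof -
  have "(\<lambda>E. gradient F x \<bullet> E) = (\<lambda>E. G \<bullet> E)"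
    using has_derivative_unique[OF has_derivative_gradient[OF assms] assms] .
  then have "(gradient F x - G) \<bullet> (gradient F x - G) = 0"
    by (metis inner_diff_left diff_self)
  then show ?thesis by simp
qed

lemma gradient_eq_0_at_minimum:
  fixes F :: "'a::euclidean_space \<Rightarrow> real"
  assumes "F differentiable (at x)" and "\<And>y. F x \<le> F y"
  shows "gradient F x = 0"
proof -
  obtain D where "(F has_derivative D) (at x)" using assms(1) differentiable_def by blast
  then have "(F has_derivative (\<lambda>E. gradient F x \<bullet> E)) (at x)" by (rule has_derivative_gradient)
  then have "(\<lambda>E. gradient F x \<bullet> E) = (\<lambda>E. 0)"
    by (intro differential_zero_maxmin[OF _ open_UNIV]) (use assms(2) in auto)
  then have "gradient F x \<bullet> gradient F x = 0" by metis
  then show ?thesis by simp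
qed

lemma gradient_comp_mult_transpose:
  fixes \<phi> :: "real^'n^'n \<Rightarrow> real" and X :: "real^'r^'n"
  assumes "\<phi> differentiable (at (X ** transpose X))"
  defines "G \<equiv> gradient \<phi> (X ** transpose X)"
  shows "gradient (\<lambda>Y. \<phi> (Y ** transpose Y)) X = (G + transpose G) ** X"
proof (rule gradient_eqI)
  have "(\<phi> has_derivative (\<lambda>M. G \<bullet> M)) (at (X ** transpose X))"
    unfolding G_def using assms(1) by (metis differentiable_def has_derivative_gradient)
  from diff_chain_at[OF has_derivative_mult_transpose this]
  have "((\<lambda>Y. \<phi> (Y ** transpose Y)) has_derivative
      (\<lambda>E. G \<bullet> (X ** transpose E) + G \<bullet> (E ** transpose X))) (at X)"
    by (simp add: o_def inner_add_right)
  moreover have "G \<bullet> (X ** transpose E) + G \<bullet> (E ** transpose X) = ((G + transpose G) ** X) \<bullet> E"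
    for E :: "real^'r^'n"
  proof -
    have "G \<bullet> (X ** transpose E) = transpose (transpose X ** G) \<bullet> E"
      using inner_transpose[of "transpose (transpose X ** G)" E]
      by (simp add: inner_matrix_mult_left)
    moreover have "G \<bullet> (E ** transpose X) = (G ** X) \<bullet> E"
      using inner_matrix_mult_right[of G E "transpose X"] by simp
    ultimately show ?thesis
      by (simp add: matrix_transpose_mul matrix_add_rdistrib inner_add_left)
  qed
  ultimately show "((\<lambda>Y. \<phi> (Y ** transpose Y)) has_derivative
      (\<lambda>E. ((G + transpose G) ** X) \<bullet> E)) (at X)"
    by simp
qed

lemma norm_transpose_mult_vector_le:
  fixes B :: "real^'j^'k"
  assumes contraction: "\<And>v. norm (B *v v) \<le> norm v"
  shows "norm (transpose B *v a) \<le> norm a"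
proof -
  define u where "u = transpose B *v a"
  have "norm u * norm u = u \<bullet> u"
    using power2_norm_eq_inner[of u] by (simp add: power2_eq_square)
  also have "\<dots> = a \<bullet> (B *v u)"
    unfolding u_def transpose_matrix_vector by (rule dot_lmul_matrix)
  also have "\<dots> \<le> norm a * norm (B *v u)" by (rule norm_cauchy_schwarz)
  also have "\<dots> \<le> norm a * norm u" using contraction[of u] by (simp add: mult_left_mono)
  finally have "norm u * norm u \<le> norm a * norm u" .
  then have "norm u \<le> norm a"
    by (cases "norm u = 0") (auto simp: mult_le_cancel_right)
  then show ?thesis unfolding u_def .
qed

lemma norm_matrix_mult_contraction_le:
  fixes M :: "real^'k^'m" and B :: "real^'j^'k"
  assumes "\<And>v. norm (B *v v) \<le> norm v"
  shows "norm (M ** B) \<le> norm M"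
  unfolding norm_vec_def[of "M ** B"] norm_vec_def[of M]
proof (rule L2_set_mono)
  fix i
  have "(M ** B) $ i = transpose B *v (M $ i)"
    by (simp add: vec_eq_iff matrix_matrix_mult_def matrix_vector_mult_def transpose_def mult_ac)
  then show "norm ((M ** B) $ i) \<le> norm (M $ i)"
    using norm_transpose_mult_vector_le[OF assms] by simp
qed simp

lemma norm_mult_inverse_sqrt_le:
  fixes X :: "real^'r^'n" and S :: "real^'r^'r"
  assumes sym: "transpose S = S" and sq: "S ** S = transpose X ** X + \<eta> *\<^sub>R mat 1"
    and "\<eta> \<ge> 0" and "invertible S"
  shows "norm ((X ** matrix_inv S) *v v) \<le> norm v"
proof -
  define u where "u = matrix_inv S *v v"
  have "norm (X *v u) ^ 2 = u \<bullet> (transpose X *v (X *v u))"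
    by (metis dot_lmul_matrix power2_norm_eq_inner vector_transpose_matrix)
  also have "\<dots> = u \<bullet> ((transpose X ** X) *v u)"
    by (simp add: matrix_vector_mul_assoc)
  also have "\<dots> = u \<bullet> ((S ** S) *v u) - \<eta> * (u \<bullet> u)"
    by (simp add: sq matrix_vector_mult_add_rdistrib inner_add_right
        scaleR_matrix_vector_assoc[symmetric])
  also have "\<dots> \<le> u \<bullet> ((S ** S) *v u)" using \<open>\<eta> \<ge> 0\<close> by simp
  also have "\<dots> = (S *v u) \<bullet> (S *v u)"
    using symmetric_matrix_inner[OF sym, of u "S *v u"]
    by (simp add: matrix_vector_mul_assoc[symmetric])
  also have "S *v u = v"
    unfolding u_def by (simp add: matrix_vector_mul_assoc matrix_mul_rinv \<open>invertible S\<close>)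
  finally have "norm (X *v u) ^ 2 \<le> norm v ^ 2" by (simp add: power2_norm_eq_inner)
  then have "norm (X *v u) \<le> norm v" by (rule power2_le_imp_le) simp
  then show ?thesis unfolding u_def by (simp add: matrix_vector_mul_assoc)
qed

theorem lemma23:
  fixes \<phi> :: "real^'n^'n \<Rightarrow> real"
    and L \<eta> :: real
    and Mstar :: "real^'n^'n"
    and X :: "real^'r^'n"
  assumes diff: "\<And>M. \<phi> differentiable (at M)"
    and lip: "\<And>M E. norm (gradient \<phi> (M + E) - gradient \<phi> M) \<le> L * norm E"
    and argmin: "\<And>M. \<phi> Mstar \<le> \<phi> M"
    and psd: "psd_mat Mstar"
    and eta: "\<eta> \<ge> 0"
    and pd: "pd_mat (transpose X ** X + \<eta> *\<^sub>R mat 1)"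
  shows "local_norm X \<eta>
           (gradient (\<lambda>Y::real^'r^'n. \<phi> (Y ** transpose Y)) X
              ** matrix_inv (transpose X ** X + \<eta> *\<^sub>R mat 1))
         = dual_local_norm X \<eta> (gradient (\<lambda>Y::real^'r^'n. \<phi> (Y ** transpose Y)) X)
       \<and> dual_local_norm X \<eta> (gradient (\<lambda>Y::real^'r^'n. \<phi> (Y ** transpose Y)) X)
         \<le> 2 * L * norm (X ** transpose X - Mstar)"
proof -
  define H where "H = transpose X ** X + \<eta> *\<^sub>R mat 1"
  define S where "S = mat_sqrt H"
  define G where "G = gradient \<phi> (X ** transpose X)"
  have SS: "S ** S = H" and "transpose S = S"
    using mat_sqrt_square mat_sqrt_psd pd_mat_imp_psd_mat[OF pd]
    unfolding S_def H_def psd_mat_def by auto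
  moreover have "invertible S" using pd by (simp add: pd_mat_square_imp_invertible SS flip: H_def)
  ultimately have contraction: "norm ((X ** matrix_inv S) *v v) \<le> norm v" for v
    using norm_mult_inverse_sqrt_le eta unfolding H_def by blast
  \<comment> \<open>Only stationarity of Mstar enters.\<close>
  have "norm G \<le> L * norm (X ** transpose X - Mstar)"
    using lip[of Mstar "X ** transpose X - Mstar"] gradient_eq_0_at_minimum[OF diff argmin]
    by (simp add: G_def)
  then have "norm ((G + transpose G) ** X ** matrix_inv S)
      \<le> 2 * L * norm (X ** transpose X - Mstar)"
    using norm_matrix_mult_contraction_le[of "X ** matrix_inv S" "G + transpose G", OF contraction]
      norm_triangle_ineq[of G "transpose G"]
    by (simp add: matrix_mul_assoc norm_transpose)
  moreover have "matrix_inv H ** S = matrix_inv S"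
    using matrix_inv_square_mult[OF \<open>invertible S\<close>] by (simp add: SS)
  ultimately show ?thesis
    unfolding local_norm_def dual_local_norm_def gradient_comp_mult_transpose[OF diff]
    by (simp flip: matrix_mul_assoc H_def S_def G_def)
qed

end
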